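(* Let $n\ge 2$ and let $\dot{\mathbf x}=\mathbf f(\sigma,\mathbf x)$ be a multistable regulatory system (MSRS) as defined in the context, with $f_k(\sigma,\mathbf x)=-l(x_k)+\sigma\frac{g(x_k)}{P(x_1,\dots,x_n)+h(x_k)}$; fix $\sigma>0$. Let $\mathbf r\in\mathbb R_{>0}^n$ be a non-diagonal equilibrium (i.e. not all coordinates equal) whose coordinates take the value $p$ exactly $i$ times and the value $q\ne p$ exactly $n-i$ times, where $1\le i\le\lfloor n/2\rfloor$. Let $\boldsymbol\rho=(p,\dots,p,q,\dots,q)$ be the point with $p$ in the first $i$ coordinates and $q$ in the last $n-i$ coordinates. For $k=1,\dots,n$ let $D_k(\mathbf x)=-\frac{P(\mathbf x)+h(x_k)}{l(x_k)}$, and set $$\beta=\frac{\partial f_1}{\partial x_1}(\boldsymbol\rho),\ \tau=\frac{\partial f_n}{\partial x_n}(\boldsymbol\rho),\ \gamma=\frac{\frac{\partial P}{\partial x_2}(\boldsymbol\rho)}{D_1(\boldsymbol\rho)},\ \xi=\frac{\frac{\partial P}{\partial x_{n-1}}(\boldsymbol\rho)}{D_n(\boldsymbol\rho)},\ \mu=\frac{\frac{\partial P}{\partial x_n}(\boldsymbol\rho)}{D_1(\boldsymbol\rho)},\ \nu=\frac{\frac{\partial P}{\partial x_1}(\boldsymbol\rho)}{D_n(\boldsymbol\rho)},$$ $$G_1=\tau-\xi,\quad G_2=\beta-\gamma,\quad G_3=\beta+\tau+(i-1)\gamma+(n-i-1)\xi,$$ $$G_4=\big(\beta+(i-1)\gamma\big)\big(\tau+(n-i-1)\xi\big)-i(n-i)\mu\nu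 .$$ Then $\det\left(\lambda I-J_{\mathbf f}(\mathbf r)\right)=(\lambda-G_1)^{n-i-1}(\lambda-G_2)^{i-1}\left(\lambda^2-G_3\lambda+G_4\right)$, where $J_{\mathbf f}=\left[\frac{\partial f_i}{\partial x_j}\right]$ is the Jacobian matrix with respect to $\mathbf x$.
   Context: A system of ODEs $\frac{dx_k}{dt}=f_k(\sigma,x_1,\dots,x_n)$, $k=1,\dots,n$, is called a multistable regulatory system (MSRS) if $f_k(\sigma,x_1,\dots,x_n)=-l(x_k)+\sigma\frac{g(x_k)}{P(x_1,\dots,x_n)+h(x_k)}$, where $l,g,h$ are real functions of one real variable and $P$ is a real function of $n$ real variables (all differentiable), and: (1) $\sigma$ is a positive parameter; (2) $P$ is symmetric, i.e. unchanged under interchanging any two of its arguments; (3) for every $k$ and every $(x_1,\dots,x_n)\in\mathbb R_{>0}^n$, $P(x_1,\dots,x_n)+h(x_k)>0$; (4) $l(z)\neq 0$ and for every $\sigma>0$ the function $z\mapsto \sigma\frac{g(z)}{l(z)}-h(z)$ has at most one extreme point for $z\in\mathbb R_{>0}$. For a given $\sigma$, a point $\mathbf r\in\mathbb R_{>0}^n$ is an equilibrium if $f_1(\sigma,\mathbf r)=\dots=f_n(\sigma,\mathbf r)=0$. *)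

theory Defs
  imports "HOL-Analysis.Analysis" "Jordan_Normal_Form.Determinant"
begin

text \<open>Points of R^n are represented as vectors x of dimension n (Jordan_Normal_Form vec),
coordinates x_1..x_n being x $ 0 .. x $ (n-1).\<close>

definition partial_vec :: "(real vec \<Rightarrow> real) \<Rightarrow> nat \<Rightarrow> real vec \<Rightarrow> real" where
  "partial_vec F j x = deriv (\<lambda>t. F (vec (dim_vec x) (\<lambda>m. if m = j then t else x $ m))) (x $ j)"

definition partial_differentiable :: "(real vec \<Rightarrow> real) \<Rightarrow> nat \<Rightarrow> real vec \<Rightarrow> bool" where
  "partial_differentiable F j x \<longleftrightarrow>
     (\<lambda>t. F (vec (dim_vec x) (\<lambda>m. if m = j then t else x $ m))) differentiable (at (x $ j))"

definition jacobian :: "nat \<Rightarrow> (nat \<Rightarrow> real vec \<Rightarrow> real) \<Rightarrow> real vec \<Rightarrow> real mat" where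
  "jacobian n F x = mat n n (\<lambda>(a, b). partial_vec (F a) b x)"

definition msrs_f :: "(real \<Rightarrow> real) \<Rightarrow> (real \<Rightarrow> real) \<Rightarrow> (real \<Rightarrow> real) \<Rightarrow> (real vec \<Rightarrow> real)
    \<Rightarrow> real \<Rightarrow> nat \<Rightarrow> real vec \<Rightarrow> real" where
  "msrs_f l g h P \<sigma> k x = - l (x $ k) + \<sigma> * g (x $ k) / (P x + h (x $ k))"

definition pos_vec :: "nat \<Rightarrow> real vec set" where
  "pos_vec n = {x \<in> carrier_vec n. \<forall>k<n. x $ k > 0}"

definition extreme_point_on :: "real set \<Rightarrow> (real \<Rightarrow> real) \<Rightarrow> real \<Rightarrow> bool" where
  "extreme_point_on S \<phi> z \<longleftrightarrow> z \<in> S \<and> (\<exists>e>0.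
      (\<forall>y\<in>S. \<bar>y - z\<bar> < e \<longrightarrow> \<phi> y \<le> \<phi> z) \<or> (\<forall>y\<in>S. \<bar>y - z\<bar> < e \<longrightarrow> \<phi> z \<le> \<phi> y))"

definition symmetric_fun :: "nat \<Rightarrow> (real vec \<Rightarrow> real) \<Rightarrow> bool" where
  "symmetric_fun n P \<longleftrightarrow> (\<forall>x \<in> carrier_vec n. \<forall>a<n. \<forall>b<n.
      P (vec n (\<lambda>k. if k = a then x $ b else if k = b then x $ a else x $ k)) = P x)"

text \<open>Multistable regulatory system (conditions (2)-(4) and differentiability of l,g,h,P;
 condition (1), sigma > 0, is imposed separately).\<close>
definition msrs :: "nat \<Rightarrow> (real \<Rightarrow> real) \<Rightarrow> (real \<Rightarrow> real) \<Rightarrow> (real \<Rightarrow> real) \<Rightarrow> (real vec \<Rightarrow> real) \<Rightarrow> bool" where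
  "msrs n l g h P \<longleftrightarrow>
     (\<forall>z. l differentiable (at z) \<and> g differentiable (at z) \<and> h differentiable (at z)) \<and>
     (\<forall>x \<in> carrier_vec n. \<forall>j<n. partial_differentiable P j x) \<and>
     symmetric_fun n P \<and>
     (\<forall>x \<in> pos_vec n. \<forall>k<n. P x + h (x $ k) > 0) \<and>
     (\<forall>z>0. l z \<noteq> 0) \<and>
     (\<forall>\<sigma>>0. \<forall>z1 z2. extreme_point_on {0<..} (\<lambda>z. \<sigma> * g z / l z - h z) z1 \<and>
                    extreme_point_on {0<..} (\<lambda>z. \<sigma> * g z / l z - h z) z2 \<longrightarrow> z1 = z2)"

end

theory Submission
  imports Defs
begin

text \<open>
  At an equilibrium the equation \<open>\<sigma> g(x\<^sub>a) / (P(x) + h(x\<^sub>a)) = l(x\<^sub>a)\<close> turns the off-diagonal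
  Jacobian entries into \<open>\<partial>\<^sub>bP(x) / D\<^sub>a(x)\<close>, so \<open>\<lambda>I - J\<close> is a diagonal matrix minus the
  rank-one matrix \<open>(\<partial>\<^sub>bP(x) / D\<^sub>a(x))\<^sub>a\<^sub>,\<^sub>b\<close>. By symmetry of \<open>P\<close>, a simultaneous permutation of rows
  and columns reduces \<open>r\<close> to the sorted point \<open>\<rho>\<close>, and at \<open>\<rho>\<close> all these quantities only
  depend on whether an index lies in the \<open>p\<close>-block or in the \<open>q\<close>-block. The matrix determinant
  lemma for a diagonal-minus-rank-one matrix with two constant blocks then yields the
  factorisation.
\<close>

lemma det_diag_minus_rank1_last_row:
  fixes e w v :: "nat \<Rightarrow> 'a::comm_ring_1"
  shows "det (mat (Suc n) (Suc n) (\<lambda>(a, b).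
      if a = n then - w n * v b else (if a = b then e a else 0) - w a * v b))
    = - w n * v n * (\<Prod>a<n. e a)"
proof -
  define L where "L = mat (Suc n) (Suc n) (\<lambda>(a, b).
    if a = b then (if a = n then - w n else 1) else if b = n then - w a else 0)"
  define U where "U = mat (Suc n) (Suc n) (\<lambda>(a, b).
    if a = n then v b else if a = b then e a else 0)"
  have factor: "mat (Suc n) (Suc n) (\<lambda>(a, b).
      if a = n then - w n * v b else (if a = b then e a else 0) - w a * v b) = L * U"
    (is "?M = _")
  proof (rule eq_matI)
    fix a b assume ab: "a < dim_row (L * U)" "b < dim_col (L * U)"
    have "(\<Sum>c<Suc n. L $$ (a, c) * U $$ (c, b))
        = (\<Sum>c<n. L $$ (a, c) * U $$ (c, b)) + L $$ (a, n) * U $$ (n, b)"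
      by simp
    also have "(\<Sum>c<n. L $$ (a, c) * U $$ (c, b)) = (if a < n then U $$ (a, b) else 0)"
      using ab by (simp add: L_def if_distrib[of "\<lambda>x. x * _"] sum.If_cases lessThan_def)
    finally show "?M $$ (a, b) = (L * U) $$ (a, b)"
      using ab by (auto simp: L_def U_def scalar_prod_def less_Suc_eq atLeast0LessThan)
  qed (auto simp: L_def U_def)
  have "L \<in> carrier_mat (Suc n) (Suc n)" "U \<in> carrier_mat (Suc n) (Suc n)"
    by (auto simp: L_def U_def)
  moreover have "det L = - w n"
    by (subst det_upper_triangular[of L "Suc n"])
       (auto simp: L_def prod_list_diag_prod atLeast0LessThan)
  moreover have "det U = (\<Prod>a<n. e a) * v n"
    by (subst det_lower_triangular[of "Suc n" U])
       (auto simp: U_def prod_list_diag_prod atLeast0LessThan mult.commute)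
  ultimately show ?thesis
    unfolding factor by (simp add: det_mult)
qed

lemma det_diag_minus_rank1:
  fixes e w v :: "nat \<Rightarrow> 'a::idom"
  shows "det (mat n n (\<lambda>(a, b). (if a = b then e a else 0) - w a * v b))
    = (\<Prod>a<n. e a) - (\<Sum>a<n. w a * v a * (\<Prod>b\<in>{..<n} - {a}. e b))"
proof (induction n)
  case 0
  then show ?case by (simp add: det_dim_zero)
next
  case (Suc n)
  define M where "M m = mat m m (\<lambda>(a, b). (if a = b then e a else 0) - w a * v b)" for m
  define c where "c a = row (M (Suc n)) a" for a
  define rows where "rows u = mat\<^sub>r (Suc n) (Suc n) (\<lambda>a. if a = n then u else c a)" for u
  have "det (M (Suc n)) = det (rows (e n \<cdot>\<^sub>v unit_vec (Suc n) n + vec (Suc n) (\<lambda>b. - w n * v b)))"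
    by (rule arg_cong[of _ _ det], rule eq_matI) (auto simp: M_def rows_def c_def)
  also have "\<dots> = det (rows (e n \<cdot>\<^sub>v unit_vec (Suc n) n))
      + det (rows (vec (Suc n) (\<lambda>b. - w n * v b)))"
    unfolding rows_def by (rule det_row_add) (auto simp: M_def c_def)
  also have "det (rows (e n \<cdot>\<^sub>v unit_vec (Suc n) n)) = det (M n) * e n"
  proof -
    have blocks: "rows (e n \<cdot>\<^sub>v unit_vec (Suc n) n)
        = four_block_mat (M n) (mat n 1 (\<lambda>(a, _). - w a * v n)) (0\<^sub>m 1 n) (mat 1 1 (\<lambda>_. e n))"
      by (rule eq_matI) (auto simp: M_def rows_def c_def less_Suc_eq)
    show ?thesis
      unfolding blocks
      by (subst det_four_block_mat_lower_left_zero[of _ n _ 1]) (auto simp: M_def det_single)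
  qed
  also have "det (rows (vec (Suc n) (\<lambda>b. - w n * v b))) = - w n * v n * (\<Prod>a<n. e a)"
  proof -
    have "rows (vec (Suc n) (\<lambda>b. - w n * v b)) = mat (Suc n) (Suc n) (\<lambda>(a, b).
        if a = n then - w n * v b else (if a = b then e a else 0) - w a * v b)"
      by (rule eq_matI) (auto simp: M_def rows_def c_def)
    then show ?thesis by (simp add: det_diag_minus_rank1_last_row)
  qed
  also have "det (M n) * e n + - w n * v n * (\<Prod>a<n. e a)
      = (\<Prod>a<Suc n. e a) - (\<Sum>a<Suc n. w a * v a * (\<Prod>b\<in>{..<Suc n} - {a}. e b))"
  proof -
    have IH: "det (M n) = (\<Prod>a<n. e a) - (\<Sum>a<n. w a * v a * (\<Prod>b\<in>{..<n} - {a}. e b))"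
      using Suc.IH by (simp add: M_def)
    have "(\<Prod>b\<in>{..<Suc n} - {a}. e b) = e n * (\<Prod>b\<in>{..<n} - {a}. e b)" if "a < n" for a
    proof -
      have "{..<Suc n} - {a} = insert n ({..<n} - {a})" using that by auto
      then show ?thesis by simp
    qed
    moreover have "{..<Suc n} - {n} = {..<n}" by auto
    ultimately show ?thesis
      unfolding IH by (simp add: algebra_simps sum_distrib_left sum_distrib_right)
  qed
  finally show ?case by (simp add: M_def)
qed

lemma prod_two_blocks:
  fixes x y :: "'a::comm_monoid_mult"
  assumes "finite S"
  shows "(\<Prod>b\<in>S. if b < i then x else y) = x ^ card (S \<inter> {..<i}) * y ^ card (S - {..<i})"
  using assms by (simp add: prod.If_cases Diff_eq lessThan_def)

lemma prod_two_blocks_remove: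
  fixes x y :: "'a::comm_monoid_mult"
  assumes "a < n" and "i \<le> n"
  shows "(\<Prod>b\<in>{..<n} - {a}. if b < i then x else y)
    = (if a < i then x ^ (i - 1) * y ^ (n - i) else x ^ i * y ^ (n - i - 1))"
proof (cases "a < i")
  case True
  then have "({..<n} - {a}) \<inter> {..<i} = {..<i} - {a}" "{..<n} - {a} - {..<i} = {i..<n}"
    using assms by auto
  with True show ?thesis by (simp add: prod_two_blocks)
next
  case False
  then have "({..<n} - {a}) \<inter> {..<i} = {..<i}" "{..<n} - {a} - {..<i} = {i..<n} - {a}"
    using assms by auto
  with False assms show ?thesis by (simp add: prod_two_blocks)
qed

lemma det_two_blocks_diag_minus_rank1:
  fixes x y wx wy vx vy :: "'a::idom"
  assumes "1 \<le> i" and "i < n"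
  shows "det (mat n n (\<lambda>(a, b). (if a = b then (if a < i then x else y) else 0)
      - (if a < i then wx else wy) * (if b < i then vx else vy)))
    = x ^ (i - 1) * y ^ (n - i - 1)
      * (x * y - of_nat i * (wx * vx) * y - of_nat (n - i) * (wy * vy) * x)"
proof -
  have prod_all: "(\<Prod>a<n. if a < i then x else y) = x ^ i * y ^ (n - i)"
  proof -
    have "{..<n} \<inter> {..<i} = {..<i}" "{..<n} - {..<i} = {i..<n}" using assms by auto
    then show ?thesis by (simp add: prod_two_blocks)
  qed
  have "(\<Sum>a<n. (if a < i then wx else wy) * (if a < i then vx else vy)
        * (\<Prod>b\<in>{..<n} - {a}. if b < i then x else y))
      = (\<Sum>a<n. if a < i then wx * vx * (x ^ (i - 1) * y ^ (n - i))
          else wy * vy * (x ^ i * y ^ (n - i - 1)))"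
    by (rule sum.cong) (auto simp: prod_two_blocks_remove[OF _ less_imp_le[OF assms(2)]])
  also have "\<dots> = of_nat i * wx * vx * (x ^ (i - 1) * y ^ (n - i))
      + of_nat (n - i) * wy * vy * (x ^ i * y ^ (n - i - 1))"
  proof -
    have "{a. a < n \<and> a < i} = {..<i}" "{a. a < n \<and> \<not> a < i} = {i..<n}"
      using assms by auto
    then show ?thesis
      by (simp add: sum.If_cases Diff_eq lessThan_def Int_def mult.assoc)
  qed
  finally have sum_all: "(\<Sum>a<n. (if a < i then wx else wy) * (if a < i then vx else vy)
        * (\<Prod>b\<in>{..<n} - {a}. if b < i then x else y))
      = of_nat i * wx * vx * (x ^ (i - 1) * y ^ (n - i))
        + of_nat (n - i) * wy * vy * (x ^ i * y ^ (n - i - 1))" .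
  obtain i' where "i = Suc i'" using assms(1) by (cases i) auto
  moreover obtain m' where "n - i = Suc m'" using assms(2) by (cases "n - i") auto
  ultimately show ?thesis
    unfolding det_diag_minus_rank1 prod_all sum_all by (simp add: algebra_simps)
qed

lemma two_blocks_char_poly_factor:
  fixes s \<beta> \<tau> \<gamma> \<xi> \<gamma>' \<xi>' \<mu> \<nu> :: "'a::comm_ring_1"
  assumes "1 \<le> i" and "1 \<le> m"
    and "2 \<le> i \<Longrightarrow> \<gamma> = \<gamma>'" and "2 \<le> m \<Longrightarrow> \<xi> = \<xi>'" and "\<mu> * \<nu> = \<gamma>' * \<xi>'"
  shows "(s - \<beta> + \<gamma>') ^ (i - 1) * (s - \<tau> + \<xi>') ^ (m - 1)
      * ((s - \<beta> + \<gamma>') * (s - \<tau> + \<xi>') - of_nat i * \<gamma>' * (s - \<tau> + \<xi>')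
         - of_nat m * \<xi>' * (s - \<beta> + \<gamma>'))
    = (s - (\<tau> - \<xi>)) ^ (m - 1) * (s - (\<beta> - \<gamma>)) ^ (i - 1)
      * (s\<^sup>2 - (\<beta> + \<tau> + of_nat (i - 1) * \<gamma> + of_nat (m - 1) * \<xi>) * s
         + ((\<beta> + of_nat (i - 1) * \<gamma>) * (\<tau> + of_nat (m - 1) * \<xi>) - of_nat i * of_nat m * \<mu> * \<nu>))"
proof -
  have "of_nat (i - 1) * \<gamma> = of_nat (i - 1) * \<gamma>'" "(s - (\<beta> - \<gamma>)) ^ (i - 1) = (s - \<beta> + \<gamma>') ^ (i - 1)"
    using assms(1,3) by (cases "i = 1", simp_all add: algebra_simps)+
  moreover have "of_nat (m - 1) * \<xi> = of_nat (m - 1) * \<xi>'" "(s - (\<tau> - \<xi>)) ^ (m - 1) = (s - \<tau> + \<xi>') ^ (m - 1)"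
    using assms(2,4) by (cases "m = 1", simp_all add: algebra_simps)+
  moreover have "of_nat i * of_nat m * \<mu> * \<nu> = of_nat i * of_nat m * (\<gamma>' * \<xi>')"
    using assms(5) by (simp add: mult.assoc)
  moreover obtain i' m' where "i = Suc i'" "m = Suc m'"
    using assms(1,2) by (cases i; cases m) auto
  ultimately show ?thesis
    by (simp add: power2_eq_square algebra_simps)
qed

lemma det_permute_rows_cols:
  fixes A :: "'a::comm_ring_1 mat"
  assumes A: "A \<in> carrier_mat n n" and \<pi>: "\<pi> permutes {0..<n}"
  shows "det (mat n n (\<lambda>(a, b). A $$ (\<pi> a, \<pi> b))) = det A"
proof -
  define B where "B = mat n n (\<lambda>(a, b). A $$ (a, \<pi> b))"
  have B: "B \<in> carrier_mat n n" by (simp add: B_def)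
  have "det B = det (transpose_mat B)" using det_transpose[OF B] by simp
  also have "transpose_mat B = mat n n (\<lambda>(a, b). transpose_mat A $$ (\<pi> a, b))"
    using A \<pi> by (auto simp: B_def permutes_in_image)
  also have "det \<dots> = signof \<pi> * det A"
    using det_permute_rows[of "transpose_mat A" n \<pi>] det_transpose[OF A] A \<pi> by simp
  finally have "det B = signof \<pi> * det A" .
  moreover have "mat n n (\<lambda>(a, b). A $$ (\<pi> a, \<pi> b)) = mat n n (\<lambda>(a, b). B $$ (\<pi> a, b))"
    using \<pi> by (auto simp: B_def permutes_in_image)
  ultimately have "det (mat n n (\<lambda>(a, b). A $$ (\<pi> a, \<pi> b))) = signof \<pi> * signof \<pi> * det A"
    using det_permute_rows[OF B \<pi>] by simp
  then show ?thesis
    by (simp flip: of_int_mult)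
qed

lemma partial_vec_permute:
  assumes \<pi>: "\<pi> permutes {0..<n}" and x: "x \<in> carrier_vec n" and j: "j < n"
    and FG: "\<And>y. y \<in> carrier_vec n \<Longrightarrow> F (vec n (\<lambda>k. y $ \<pi> k)) = G y"
  shows "partial_vec F j (vec n (\<lambda>k. x $ \<pi> k)) = partial_vec G (\<pi> j) x"
proof -
  have "F (vec n (\<lambda>m. if m = j then t else vec n (\<lambda>k. x $ \<pi> k) $ m))
      = G (vec n (\<lambda>m. if m = \<pi> j then t else x $ m))" for t
  proof -
    have "vec n (\<lambda>m. if m = j then t else vec n (\<lambda>k. x $ \<pi> k) $ m)
        = vec n (\<lambda>k. vec n (\<lambda>m. if m = \<pi> j then t else x $ m) $ \<pi> k)"
      using \<pi> by (intro eq_vecI) (auto simp: permutes_in_image permutes_inj[OF \<pi>, THEN inj_eq])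
    then show ?thesis by (simp add: FG)
  qed
  then show ?thesis
    using x j \<pi> by (simp add: partial_vec_def permutes_in_image)
qed

lemma symmetric_fun_permute:
  assumes sym: "symmetric_fun n P" and \<pi>: "\<pi> permutes {0..<n}" and x: "x \<in> carrier_vec n"
  shows "P (vec n (\<lambda>k. x $ \<pi> k)) = P x"
proof -
  have "\<forall>x \<in> carrier_vec n. P (vec n (\<lambda>k. x $ \<pi> k)) = P x"
    using \<pi> finite_atLeastLessThan
  proof (induction rule: permutes_induct)
    case id
    show ?case by (auto intro!: arg_cong[where f = P] eq_vecI)
  next
    case (swap a b \<pi>)
    show ?case
    proof
      fix x :: "real vec" assume x: "x \<in> carrier_vec n"
      let ?y = "vec n (\<lambda>k. if k = a then x $ b else if k = b then x $ a else x $ k)"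
      have "vec n (\<lambda>k. x $ (Transposition.transpose a b \<circ> \<pi>) k) = vec n (\<lambda>k. ?y $ \<pi> k)"
        using swap.hyps by (intro eq_vecI) (auto simp: Transposition.transpose_def permutes_in_image)
      moreover have "P ?y = P x"
        using sym swap.hyps(1,2) x unfolding symmetric_fun_def by auto
      ultimately show "P (vec n (\<lambda>k. x $ (Transposition.transpose a b \<circ> \<pi>) k)) = P x"
        using swap.IH by simp
    qed
  qed
  then show ?thesis using x by blast
qed

lemma vec_transpose_eq_self:
  fixes x :: "'a vec"
  assumes "x \<in> carrier_vec n" and "x $ a = x $ b"
  shows "vec n (\<lambda>k. x $ Transposition.transpose a b k) = x"
  using assms by (intro eq_vecI) (auto simp: Transposition.transpose_def)

lemma partial_vec_symmetric_eq:
  fixes x :: "real vec"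
  assumes sym: "symmetric_fun n P" and x: "x \<in> carrier_vec n"
    and "a < n" and "b < n" and "x $ a = x $ b"
  shows "partial_vec P a x = partial_vec P b x"
proof -
  let ?\<pi> = "Transposition.transpose a b"
  have \<pi>: "?\<pi> permutes {0..<n}" using assms by (simp add: permutes_swap_id)
  from vec_transpose_eq_self[OF x \<open>x $ a = x $ _\<close>] show ?thesis
    using partial_vec_permute[OF \<pi> x \<open>a < n\<close>, of P P] symmetric_fun_permute[OF sym \<pi>] by simp
qed

lemma msrs_f_permute:
  assumes "symmetric_fun n P" and "\<pi> permutes {0..<n}" and "y \<in> carrier_vec n" and "k < n"
  shows "msrs_f l g h P \<sigma> k (vec n (\<lambda>m. y $ \<pi> m)) = msrs_f l g h P \<sigma> (\<pi> k) y"
  using assms by (simp add: msrs_f_def symmetric_fun_permute)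

lemma jacobian_permute:
  assumes \<pi>: "\<pi> permutes {0..<n}" and x: "x \<in> carrier_vec n"
    and f: "\<And>k y. k < n \<Longrightarrow> y \<in> carrier_vec n \<Longrightarrow> f k (vec n (\<lambda>m. y $ \<pi> m)) = f (\<pi> k) y"
  shows "jacobian n f (vec n (\<lambda>k. x $ \<pi> k)) = mat n n (\<lambda>(a, b). jacobian n f x $$ (\<pi> a, \<pi> b))"
  using \<pi> by (intro eq_matI) (auto simp: jacobian_def permutes_in_image intro!: partial_vec_permute[OF \<pi> x] f)

lemma partial_vec_msrs_f_diag_eq:
  fixes x :: "real vec"
  assumes sym: "symmetric_fun n P" and x: "x \<in> carrier_vec n"
    and "a < n" and "c < n" and "x $ a = x $ c"
  shows "partial_vec (msrs_f l g h P \<sigma> a) a x = partial_vec (msrs_f l g h P \<sigma> c) c x"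
proof -
  let ?\<pi> = "Transposition.transpose a c"
  have \<pi>: "?\<pi> permutes {0..<n}" using assms by (simp add: permutes_swap_id)
  from vec_transpose_eq_self[OF x \<open>x $ a = x $ _\<close>] show ?thesis
    using partial_vec_permute[OF \<pi> x \<open>a < n\<close>, of "msrs_f l g h P \<sigma> a" "msrs_f l g h P \<sigma> c"]
      msrs_f_permute[OF sym \<pi> _ \<open>a < n\<close>] by simp
qed

lemma partial_vec_msrs_f_offdiag_at_equilibrium:
  fixes x :: "real vec"
  assumes x: "x \<in> carrier_vec n" and "a < n" and "b < n" and "a \<noteq> b"
    and P: "partial_differentiable P b x"
    and denom: "P x + h (x $ a) \<noteq> 0" and l: "l (x $ a) \<noteq> 0"
    and eq: "msrs_f l g h P \<sigma> a x = 0"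
  shows "partial_vec (msrs_f l g h P \<sigma> a) b x = partial_vec P b x / (- (P x + h (x $ a)) / l (x $ a))"
proof -
  define Q where "Q t = P (vec n (\<lambda>m. if m = b then t else x $ m))" for t
  have "Q (x $ b) = P x"
    unfolding Q_def using x by (intro arg_cong[where f = P] eq_vecI) auto
  moreover have "(Q has_real_derivative partial_vec P b x) (at (x $ b))"
    using P x unfolding Q_def partial_differentiable_def partial_vec_def
    by (simp add: DERIV_deriv_iff_real_differentiable)
  ultimately have "((\<lambda>t. - l (x $ a) + \<sigma> * g (x $ a) / (Q t + h (x $ a))) has_real_derivative
      - \<sigma> * g (x $ a) * partial_vec P b x / (P x + h (x $ a))\<^sup>2) (at (x $ b))"
    using denom by (auto intro!: derivative_eq_intros simp: power2_eq_square)
  moreover have "(\<lambda>t. msrs_f l g h P \<sigma> a (vec (dim_vec x) (\<lambda>m. if m = b then t else x $ m)))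
      = (\<lambda>t. - l (x $ a) + \<sigma> * g (x $ a) / (Q t + h (x $ a)))"
    using x \<open>a < n\<close> \<open>a \<noteq> b\<close> by (auto simp: msrs_f_def Q_def)
  ultimately have "partial_vec (msrs_f l g h P \<sigma> a) b x
      = - \<sigma> * g (x $ a) * partial_vec P b x / (P x + h (x $ a))\<^sup>2"
    unfolding partial_vec_def[of "msrs_f l g h P \<sigma> a"] by (simp add: DERIV_imp_deriv)
  moreover have "\<sigma> * g (x $ a) = l (x $ a) * (P x + h (x $ a))"
    using eq denom by (simp add: msrs_f_def field_simps)
  moreover have "- (l (x $ a) * S) * d / S\<^sup>2 = d / (- S / l (x $ a))" if "S \<noteq> 0" for S d
    using that l by (simp add: power2_eq_square field_simps)
  ultimately show ?thesis
    using denom by (simp only: mult_minus_left)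
qed

lemma partial_vec_symmetric_block:
  fixes p q :: real
  assumes "symmetric_fun n P" and "1 \<le> i" and "i < n" and "j < n"
  shows "partial_vec P j (vec n (\<lambda>k. if k < i then p else q))
    = partial_vec P (if j < i then 0 else n - 1) (vec n (\<lambda>k. if k < i then p else q))"
  using assms by (intro partial_vec_symmetric_eq) auto

lemma char_matrix_jacobian_msrs_block:
  fixes n i :: nat and l g h :: "real \<Rightarrow> real" and P :: "real vec \<Rightarrow> real"
    and p q s \<sigma> :: real
  defines "\<rho> \<equiv> vec n (\<lambda>k. if k < i then p else q)"
  defines "\<beta> \<equiv> partial_vec (msrs_f l g h P \<sigma> 0) 0 \<rho>"
    and "\<tau> \<equiv> partial_vec (msrs_f l g h P \<sigma> (n - 1)) (n - 1) \<rho>"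
    and "P\<^sub>p \<equiv> partial_vec P 0 \<rho>" and "P\<^sub>q \<equiv> partial_vec P (n - 1) \<rho>"
    and "D\<^sub>p \<equiv> - (P \<rho> + h p) / l p" and "D\<^sub>q \<equiv> - (P \<rho> + h q) / l q"
  assumes ms: "msrs n l g h P" and pos: "\<rho> \<in> pos_vec n"
    and eq: "\<forall>k<n. msrs_f l g h P \<sigma> k \<rho> = 0" and "1 \<le> i" and "i < n"
  shows "s \<cdot>\<^sub>m 1\<^sub>m n - jacobian n (\<lambda>k. msrs_f l g h P \<sigma> k) \<rho>
    = mat n n (\<lambda>(a, b). (if a = b then (if a < i then s - \<beta> + P\<^sub>p / D\<^sub>p else s - \<tau> + P\<^sub>q / D\<^sub>q) else 0)
        - (if a < i then 1 / D\<^sub>p else 1 / D\<^sub>q) * (if b < i then P\<^sub>p else P\<^sub>q))"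
    (is "_ = ?M")
proof (rule eq_matI)
  fix a b assume "a < dim_row ?M" "b < dim_col ?M"
  then have a: "a < n" and b: "b < n" by auto
  have sym: "symmetric_fun n P" using ms by (simp add: msrs_def)
  have \<rho>: "\<rho> \<in> carrier_vec n" by (simp add: \<rho>_def)
  show "(s \<cdot>\<^sub>m 1\<^sub>m n - jacobian n (\<lambda>k. msrs_f l g h P \<sigma> k) \<rho>) $$ (a, b) = ?M $$ (a, b)"
  proof (cases "a = b")
    case True
    let ?c = "if a < i then 0 else n - 1"
    have "?c < n" and "\<rho> $ a = \<rho> $ ?c"
      using a \<open>1 \<le> i\<close> \<open>i < n\<close> by (auto simp: \<rho>_def)
    from partial_vec_msrs_f_diag_eq[OF sym \<rho> a this]
    have "partial_vec (msrs_f l g h P \<sigma> a) a \<rho> = (if a < i then \<beta> else \<tau>)"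
      by (simp add: \<beta>_def \<tau>_def)
    then show ?thesis
      using True a by (simp add: jacobian_def)
  next
    case False
    have "P \<rho> + h (\<rho> $ a) > 0" and "l (\<rho> $ a) \<noteq> 0"
      using ms pos a by (auto simp: msrs_def pos_vec_def)
    then have "partial_vec (msrs_f l g h P \<sigma> a) b \<rho> = partial_vec P b \<rho> / (- (P \<rho> + h (\<rho> $ a)) / l (\<rho> $ a))"
      using ms eq a b False \<rho>
      by (intro partial_vec_msrs_f_offdiag_at_equilibrium) (auto simp: msrs_def)
    moreover have "partial_vec P b \<rho> = (if b < i then P\<^sub>p else P\<^sub>q)"
      using partial_vec_symmetric_block[OF sym \<open>1 \<le> i\<close> \<open>i < n\<close> b]
      by (simp add: P\<^sub>p_def P\<^sub>q_def \<rho>_def)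
    ultimately show ?thesis
      using False a b by (simp add: jacobian_def D\<^sub>p_def D\<^sub>q_def \<rho>_def)
  qed
qed (auto simp: jacobian_def)

lemma det_char_matrix_jacobian_msrs_permute:
  fixes x :: "real vec"
  assumes sym: "symmetric_fun n P" and \<pi>: "\<pi> permutes {0..<n}" and x: "x \<in> carrier_vec n"
  shows "det (s \<cdot>\<^sub>m 1\<^sub>m n - jacobian n (\<lambda>k. msrs_f l g h P \<sigma> k) (vec n (\<lambda>k. x $ \<pi> k)))
    = det (s \<cdot>\<^sub>m 1\<^sub>m n - jacobian n (\<lambda>k. msrs_f l g h P \<sigma> k) x)"
proof -
  let ?A = "s \<cdot>\<^sub>m 1\<^sub>m n - jacobian n (\<lambda>k. msrs_f l g h P \<sigma> k) x"
  have "s \<cdot>\<^sub>m 1\<^sub>m n - jacobian n (\<lambda>k. msrs_f l g h P \<sigma> k) (vec n (\<lambda>k. x $ \<pi> k))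
      = mat n n (\<lambda>(a, b). ?A $$ (\<pi> a, \<pi> b))"
  proof -
    have "jacobian n (\<lambda>k. msrs_f l g h P \<sigma> k) (vec n (\<lambda>k. x $ \<pi> k))
        = mat n n (\<lambda>(a, b). jacobian n (\<lambda>k. msrs_f l g h P \<sigma> k) x $$ (\<pi> a, \<pi> b))"
      by (rule jacobian_permute[OF \<pi> x]) (simp add: msrs_f_permute[OF sym \<pi>])
    then show ?thesis
      using \<pi> by (intro eq_matI) (auto simp: jacobian_def permutes_in_image permutes_inj[OF \<pi>, THEN inj_eq])
  qed
  moreover have "?A \<in> carrier_mat n n" by (simp add: jacobian_def minus_carrier_mat)
  ultimately show ?thesis
    by (simp only: det_permute_rows_cols[OF _ \<pi>])
qed

lemma two_valued_vec_sorting_permutation: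
  fixes x :: "'a vec"
  assumes x: "x \<in> carrier_vec n" and "p \<noteq> q"
    and card_p: "card {k. k < n \<and> x $ k = p} = i" and card_q: "card {k. k < n \<and> x $ k = q} = n - i"
  obtains \<pi> where "\<pi> permutes {0..<n}" and "vec n (\<lambda>k. x $ \<pi> k) = vec n (\<lambda>k. if k < i then p else q)"
proof -
  define S\<^sub>p where "S\<^sub>p = {k. k < n \<and> x $ k = p}"
  define S\<^sub>q where "S\<^sub>q = {k. k < n \<and> x $ k = q}"
  have fin: "finite S\<^sub>p" "finite S\<^sub>q" and disj: "S\<^sub>p \<inter> S\<^sub>q = {}"
    using \<open>p \<noteq> q\<close> by (auto simp: S\<^sub>p_def S\<^sub>q_def)
  have "i \<le> n"
    using card_p card_mono[of "{..<n}" S\<^sub>p] by (auto simp: S\<^sub>p_def)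
  obtain f\<^sub>p where f\<^sub>p: "bij_betw f\<^sub>p {0..<i} S\<^sub>p"
    using finite_same_card_bij[of "{0..<i}" S\<^sub>p] fin card_p by (auto simp: S\<^sub>p_def)
  obtain f\<^sub>q where f\<^sub>q: "bij_betw f\<^sub>q {i..<n} S\<^sub>q"
    using finite_same_card_bij[of "{i..<n}" S\<^sub>q] fin card_q by (auto simp: S\<^sub>q_def)
  define \<pi> where "\<pi> k = (if k < i then f\<^sub>p k else if k < n then f\<^sub>q k else k)" for k
  have bij_p: "bij_betw \<pi> {0..<i} S\<^sub>p"
    using f\<^sub>p by (rule bij_betw_cong[THEN iffD2, rotated]) (auto simp: \<pi>_def)
  have bij_q: "bij_betw \<pi> {i..<n} S\<^sub>q"
    using f\<^sub>q by (rule bij_betw_cong[THEN iffD2, rotated]) (auto simp: \<pi>_def)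
  have "card (S\<^sub>p \<union> S\<^sub>q) = n"
    using card_Un_disjoint[OF fin disj] card_p card_q \<open>i \<le> n\<close> by (simp add: S\<^sub>p_def S\<^sub>q_def)
  then have "S\<^sub>p \<union> S\<^sub>q = {0..<n}"
    by (intro card_subset_eq) (auto simp: S\<^sub>p_def S\<^sub>q_def)
  moreover have "{0..<i} \<union> {i..<n} = {0..<n}" using \<open>i \<le> n\<close> by auto
  ultimately have "bij_betw \<pi> {0..<n} {0..<n}"
    using bij_betw_combine[OF bij_p bij_q disj] by simp
  then have "\<pi> permutes {0..<n}"
    by (rule bij_imp_permutes) (use \<open>i \<le> n\<close> in \<open>auto simp: \<pi>_def\<close>)
  moreover have "vec n (\<lambda>k. x $ \<pi> k) = vec n (\<lambda>k. if k < i then p else q)"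
  proof (rule eq_vecI)
    fix k assume "k < dim_vec (vec n (\<lambda>k. if k < i then p else q))"
    then show "vec n (\<lambda>k. x $ \<pi> k) $ k = vec n (\<lambda>k. if k < i then p else q) $ k"
      using bij_betwE[OF bij_p] bij_betwE[OF bij_q] by (auto simp: S\<^sub>p_def S\<^sub>q_def)
  qed simp
  ultimately show ?thesis using that by blast
qed

lemma char_poly_jacobian_msrs_block_equilibrium:
  fixes n i :: nat and l g h :: "real \<Rightarrow> real" and P :: "real vec \<Rightarrow> real"
    and p q s \<sigma> :: real
  defines "\<rho> \<equiv> vec n (\<lambda>k. if k < i then p else q)"
  defines "\<beta> \<equiv> partial_vec (msrs_f l g h P \<sigma> 0) 0 \<rho>"
    and "\<tau> \<equiv> partial_vec (msrs_f l g h P \<sigma> (n - 1)) (n - 1) \<rho>"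
    and "D\<^sub>p \<equiv> - (P \<rho> + h p) / l p" and "D\<^sub>q \<equiv> - (P \<rho> + h q) / l q"
  defines "\<gamma> \<equiv> partial_vec P 1 \<rho> / D\<^sub>p" and "\<xi> \<equiv> partial_vec P (n - 2) \<rho> / D\<^sub>q"
    and "\<mu> \<equiv> partial_vec P (n - 1) \<rho> / D\<^sub>p" and "\<nu> \<equiv> partial_vec P 0 \<rho> / D\<^sub>q"
  assumes ms: "msrs n l g h P" and pos: "\<rho> \<in> pos_vec n"
    and eq: "\<forall>k<n. msrs_f l g h P \<sigma> k \<rho> = 0" and i: "1 \<le> i" "2 * i \<le> n"
  shows "det (s \<cdot>\<^sub>m 1\<^sub>m n - jacobian n (\<lambda>k. msrs_f l g h P \<sigma> k) \<rho>)
    = (s - (\<tau> - \<xi>)) ^ (n - i - 1) * (s - (\<beta> - \<gamma>)) ^ (i - 1)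
      * (s\<^sup>2 - (\<beta> + \<tau> + real (i - 1) * \<gamma> + real (n - i - 1) * \<xi>) * s
         + ((\<beta> + real (i - 1) * \<gamma>) * (\<tau> + real (n - i - 1) * \<xi>) - real i * real (n - i) * \<mu> * \<nu>))"
proof -
  have sym: "symmetric_fun n P" using ms by (simp add: msrs_def)
  have "i < n" using i by simp
  define P\<^sub>p where "P\<^sub>p = partial_vec P 0 \<rho>"
  define P\<^sub>q where "P\<^sub>q = partial_vec P (n - 1) \<rho>"
  \<comment> \<open>\<open>\<gamma>\<close> (resp. \<open>\<xi>\<close>) is the rank-one weight of the \<open>p\<close>-block (resp. \<open>q\<close>-block) only if that
    block has a second index; otherwise it occurs with exponent and coefficient \<open>0\<close>.\<close>
  have "2 \<le> i \<Longrightarrow> \<gamma> = 1 / D\<^sub>p * P\<^sub>p" "2 \<le> n - i \<Longrightarrow> \<xi> = 1 / D\<^sub>q * P\<^sub>q"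
    "\<mu> * \<nu> = 1 / D\<^sub>p * P\<^sub>p * (1 / D\<^sub>q * P\<^sub>q)"
    using partial_vec_symmetric_block[OF sym i(1) \<open>i < n\<close>, of 1 p q]
      partial_vec_symmetric_block[OF sym i(1) \<open>i < n\<close>, of "n - 2" p q] i
    by (auto simp: \<gamma>_def \<xi>_def \<mu>_def \<nu>_def P\<^sub>p_def P\<^sub>q_def \<rho>_def)
  from two_blocks_char_poly_factor[OF i(1) _ this, of "n - i" s \<beta> \<tau>] i
  show ?thesis
    unfolding char_matrix_jacobian_msrs_block[OF ms pos[unfolded \<rho>_def] eq[unfolded \<rho>_def] i(1) \<open>i < n\<close>,
        folded \<rho>_def, folded \<beta>_def \<tau>_def P\<^sub>p_def P\<^sub>q_def D\<^sub>p_def D\<^sub>q_def]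
      det_two_blocks_diag_minus_rank1[OF i(1) \<open>i < n\<close>]
    by simp
qed

theorem theorem4:
  fixes n i :: nat and l g h :: "real \<Rightarrow> real" and P :: "real vec \<Rightarrow> real"
    and \<sigma> p q :: real and r :: "real vec"
  assumes "n \<ge> 2"
    and "msrs n l g h P"
    and "\<sigma> > 0"
    and "r \<in> pos_vec n"
    and "\<forall>k<n. msrs_f l g h P \<sigma> k r = 0"
    and "p \<noteq> q"
    and "1 \<le> i" and "i \<le> n div 2"
    and "card {k. k < n \<and> r $ k = p} = i"
    and "card {k. k < n \<and> r $ k = q} = n - i"
  shows "let \<rho> = vec n (\<lambda>k. if k < i then p else q);
             D = (\<lambda>k x. - (P x + h (x $ k)) / l (x $ k));
             \<beta> = partial_vec (msrs_f l g h P \<sigma> 0) 0 \<rho>;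
             \<tau> = partial_vec (msrs_f l g h P \<sigma> (n - 1)) (n - 1) \<rho>;
             \<gamma> = partial_vec P 1 \<rho> / D 0 \<rho>;
             \<xi> = partial_vec P (n - 2) \<rho> / D (n - 1) \<rho>;
             \<mu> = partial_vec P (n - 1) \<rho> / D 0 \<rho>;
             \<nu> = partial_vec P 0 \<rho> / D (n - 1) \<rho>;
             G1 = \<tau> - \<xi>;
             G2 = \<beta> - \<gamma>;
             G3 = \<beta> + \<tau> + real (i - 1) * \<gamma> + real (n - i - 1) * \<xi>;
             G4 = (\<beta> + real (i - 1) * \<gamma>) * (\<tau> + real (n - i - 1) * \<xi>)
                  - real i * real (n - i) * \<mu> * \<nu>
         in \<forall>s::real. det (s \<cdot>\<^sub>m 1\<^sub>m n - jacobian n (\<lambda>k. msrs_f l g h P \<sigma> k) r)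
              = (s - G1) ^ (n - i - 1) * (s - G2) ^ (i - 1) * (s\<^sup>2 - G3 * s + G4)"
proof -
  have sym: "symmetric_fun n P" using assms(2) by (simp add: msrs_def)
  have r: "r \<in> carrier_vec n" using assms(4) by (simp add: pos_vec_def)
  define \<rho> where "\<rho> = vec n (\<lambda>k. if k < i then p else q)"
  obtain \<pi> where \<pi>: "\<pi> permutes {0..<n}" and sorted: "vec n (\<lambda>k. r $ \<pi> k) = \<rho>"
    using two_valued_vec_sorting_permutation[OF r assms(6,9,10)] unfolding \<rho>_def by blast
  have pos: "\<rho> \<in> pos_vec n"
    using assms(4) \<pi> sorted[symmetric] by (auto simp: pos_vec_def permutes_in_image)
  have eq: "\<forall>k<n. msrs_f l g h P \<sigma> k \<rho> = 0"
    using assms(5) \<pi> by (simp flip: sorted add: msrs_f_permute[OF sym \<pi> r] permutes_in_image)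
  have "\<rho> $ 0 = p" "\<rho> $ (n - 1) = q" and "2 * i \<le> n"
    using assms(1,7,8) by (auto simp: \<rho>_def)
  then show ?thesis
    unfolding Let_def \<rho>_def[symmetric]
    by (simp only: det_char_matrix_jacobian_msrs_permute[OF sym \<pi> r, unfolded sorted, symmetric]
        char_poly_jacobian_msrs_block_equilibrium[OF assms(2) pos[unfolded \<rho>_def] eq[unfolded \<rho>_def]
          assms(7), folded \<rho>_def]) simp
qed

end
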